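(* For every finite hypergraph $H$, $\mathrm{ch}_{um}(H)\le\Delta(H)+1$.
   Context: A hypergraph $H=(V,\mathcal E)$ has finite vertex set and nonempty hyperedges. $\Delta(H)$ is the maximum, over $v\in V$, of the number of hyperedges containing $v$. A coloring $C\colon V\to\mathbb Z_{>0}$ is unique-maximum if in every hyperedge the maximum color is attained by exactly one vertex. The um-choice number $\mathrm{ch}_{um}(H)$ is the minimum $k$ such that for every family $\{L_v\}_{v\in V}$ of sets of positive integers with $|L_v|\ge k$ there is a unique-maximum coloring $C$ with $C(v)\in L_v$ for all $v$. *)

theory Defs
  imports Main
begin

definition hypergraph :: "'a set \<Rightarrow> 'a set set \<Rightarrow> bool" where
  "hypergraph V E \<longleftrightarrow> (\<forall>e\<in>E. e \<noteq> {} \<and> e \<subseteq> V)"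

definition max_degree :: "'a set \<Rightarrow> 'a set set \<Rightarrow> nat" where
  "max_degree V E = Max (insert 0 ((\<lambda>v. card {e\<in>E. v \<in> e}) ` V))"

definition um_coloring :: "'a set \<Rightarrow> 'a set set \<Rightarrow> ('a \<Rightarrow> nat) \<Rightarrow> bool" where
  "um_coloring V E C \<longleftrightarrow> (\<forall>v\<in>V. C v > 0) \<and>
     (\<forall>e\<in>E. \<exists>!v. v \<in> e \<and> C v = Max (C ` e))"

definition list_size_ge :: "nat set \<Rightarrow> nat \<Rightarrow> bool" where
  "list_size_ge L k \<longleftrightarrow> infinite L \<or> k \<le> card L"

definition um_choosable :: "'a set \<Rightarrow> 'a set set \<Rightarrow> nat \<Rightarrow> bool" where
  "um_choosable V E k \<longleftrightarrow>
     (\<forall>L :: 'a \<Rightarrow> nat set. (\<forall>v\<in>V. L v \<subseteq> {0<..} \<and> list_size_ge (L v) k) \<longrightarrow>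
        (\<exists>C. um_coloring V E C \<and> (\<forall>v\<in>V. C v \<in> L v)))"

definition ch_um :: "'a set \<Rightarrow> 'a set set \<Rightarrow> nat" where
  "ch_um V E = (LEAST k. um_choosable V E k)"

end

theory Submission
  imports Defs
begin

(* Proof idea (greedy colouring along a vertex deletion order).
   We prove the stronger, degree-by-degree statement: if every vertex v has a
   list L v of positive colours with more than deg(v) entries, then a
   unique-maximum colouring from the lists exists.  Induct on the vertex set:
   delete a vertex v, shrinking every hyperedge e to e - {v} (dropping edges that
   become empty); degrees do not grow, so the smaller hypergraph has a
   unique-maximum colouring C from the lists.  Each edge through v forbids one
   colour for v, namely the maximum of C on e - {v}; there are at most deg(v)
   such colours, so L v contains an allowed colour c.  Giving v the colour c
   keeps the maximum unique on every edge: it either stays the old unique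
   maximum or becomes c, attained only at v. *)

definition incident :: "'a set set \<Rightarrow> 'a \<Rightarrow> 'a set set" where
  "incident E v = {e \<in> E. v \<in> e}"

definition delete_vertex :: "'a set set \<Rightarrow> 'a \<Rightarrow> 'a set set" where
  "delete_vertex E v = (\<lambda>e. e - {v}) ` {e \<in> E. e - {v} \<noteq> {}}"

definition forbidden_colours :: "'a set set \<Rightarrow> ('a \<Rightarrow> nat) \<Rightarrow> 'a \<Rightarrow> nat set" where
  "forbidden_colours E C v = (\<lambda>e. Max (C ` (e - {v}))) ` {e \<in> incident E v. e - {v} \<noteq> {}}"

lemma unique_max_insert:
  fixes f :: "'a \<Rightarrow> 'b::linorder"
  assumes fin: "finite S" and ne: "S \<noteq> {}" and new: "v \<notin> S"
    and uniq: "\<exists>!x. x \<in> S \<and> f x = Max (f ` S)"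
    and differs: "f v \<noteq> Max (f ` S)"
  shows "\<exists>!x. x \<in> insert v S \<and> f x = Max (f ` insert v S)"
proof -
  let ?m = "Max (f ` S)"
  have Max_ins: "Max (f ` insert v S) = max (f v) ?m"
    using fin ne by simp
  have below: "f x \<le> ?m" if "x \<in> S" for x
    using fin that by simp
  show ?thesis
  proof (cases "f v > ?m")
    case True
    then have top: "Max (f ` insert v S) = f v"
      using Max_ins by simp
    show ?thesis
    proof (rule ex1I[of _ v])
      show "v \<in> insert v S \<and> f v = Max (f ` insert v S)"
        using top by simp
    next
      fix x
      assume "x \<in> insert v S \<and> f x = Max (f ` insert v S)"
      then show "x = v"
        using below True top by (metis insertE leD)
    qed
  next
    case False
    then have "Max (f ` insert v S) = ?m"
      using Max_ins by simp
    then show ?thesis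
      using uniq differs by auto
  qed
qed

lemma finite_edges:
  assumes "finite V" "hypergraph V E"
  shows "finite E"
  using assms unfolding hypergraph_def
  by (meson Pow_iff finite_Pow_iff rev_finite_subset subsetI)

lemma hypergraph_delete_vertex:
  assumes "hypergraph (insert v F) E"
  shows "hypergraph F (delete_vertex E v)"
  using assms unfolding hypergraph_def delete_vertex_def by blast

lemma degree_delete_vertex_le:
  assumes "finite E"
  shows "card (incident (delete_vertex E v) u) \<le> card (incident E u)"
proof -
  have "incident (delete_vertex E v) u \<subseteq> (\<lambda>e. e - {v}) ` incident E u"
    unfolding incident_def delete_vertex_def by auto
  then have "card (incident (delete_vertex E v) u) \<le> card ((\<lambda>e. e - {v}) ` incident E u)"
    using assms by (intro card_mono) (auto simp: incident_def)
  also have "\<dots> \<le> card (incident E u)"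
    by (rule card_image_le) (use assms in \<open>auto simp: incident_def\<close>)
  finally show ?thesis .
qed

lemma card_forbidden_colours:
  assumes "finite E"
  shows "finite (forbidden_colours E C v) \<and> card (forbidden_colours E C v) \<le> card (incident E v)"
proof -
  have fin: "finite (incident E v)"
    using assms by (simp add: incident_def)
  have "card (forbidden_colours E C v) \<le> card {e \<in> incident E v. e - {v} \<noteq> {}}"
    unfolding forbidden_colours_def by (rule card_image_le) (use fin in auto)
  also have "\<dots> \<le> card (incident E v)"
    by (rule card_mono) (use fin in auto)
  finally show ?thesis
    using fin by (simp add: forbidden_colours_def)
qed

lemma list_avoids:
  assumes "finite B" "card B \<le> d" "infinite L \<or> d < card L"
  shows "\<exists>c \<in> L. c \<notin> B"
proof (rule ccontr)
  assume "\<not> ?thesis"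
  then have "L \<subseteq> B" by blast
  then have "finite L" "card L \<le> card B"
    using assms(1) by (auto intro: finite_subset card_mono)
  then show False using assms(2,3) by linarith
qed

text \<open>The extension step on a single edge: after colouring v by a
  non-forbidden colour, each edge of the original hypergraph has a unique
  maximum, inherited from the edge e - {v} of the vertex-deleted hypergraph.\<close>
lemma extended_edge_unique_max:
  assumes fin: "finite F" and H: "hypergraph (insert v F) E"
    and C: "um_coloring F (delete_vertex E v) C"
    and allowed: "c \<notin> forbidden_colours E C v" and e: "e \<in> E"
  shows "\<exists>!x. x \<in> e \<and> (C(v := c)) x = Max (C(v := c) ` e)"
proof -
  let ?C' = "C(v := c)"
  have uniq_old: "\<exists>!x. x \<in> e' \<and> C x = Max (C ` e')" if "e' \<in> delete_vertex E v" for e'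
    using C that unfolding um_coloring_def by blast
  show ?thesis
  proof (cases "v \<in> e")
    case False
    then have "e - {v} = e" "e \<noteq> {}"
      using H e unfolding hypergraph_def by auto
    then have "e \<in> delete_vertex E v"
      unfolding delete_vertex_def using e by (metis (mono_tags, lifting) image_eqI mem_Collect_eq)
    moreover have "?C' ` e = C ` e" "\<forall>x\<in>e. ?C' x = C x"
      using False by auto
    ultimately show ?thesis
      using uniq_old by (metis (no_types, lifting))
  next
    case True
    let ?S = "e - {v}"
    show ?thesis
    proof (cases "?S = {}")
      case True
      then have "e = {v}" using \<open>v \<in> e\<close> by blast
      then show ?thesis by auto
    next
      case False
      have finS: "finite ?S"
        using H e fin unfolding hypergraph_def by (meson finite_Diff finite_insert finite_subset)
      have agree: "?C' ` ?S = C ` ?S"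
        by auto
      have "?S \<in> delete_vertex E v"
        unfolding delete_vertex_def using e False by blast
      then have "\<exists>!x. x \<in> ?S \<and> ?C' x = Max (?C' ` ?S)"
        using uniq_old agree by (metis (no_types, lifting) Diff_iff fun_upd_other singletonI)
      moreover have "?C' v \<noteq> Max (?C' ` ?S)"
        using allowed e True False agree
        unfolding forbidden_colours_def incident_def by auto
      ultimately have "\<exists>!x. x \<in> insert v ?S \<and> ?C' x = Max (?C' ` insert v ?S)"
        using finS False by (intro unique_max_insert) auto
      then show ?thesis
        using True by (simp add: insert_absorb)
    qed
  qed
qed

lemma extend_um_coloring:
  assumes fin: "finite F" and H: "hypergraph (insert v F) E"
    and C: "um_coloring F (delete_vertex E v) C"
    and pos: "c > 0" and allowed: "c \<notin> forbidden_colours E C v"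
  shows "um_coloring (insert v F) E (C(v := c))"
proof -
  have "\<forall>u\<in>insert v F. (C(v := c)) u > 0"
    using C pos unfolding um_coloring_def by auto
  then show ?thesis
    using extended_edge_unique_max[OF fin H C allowed] unfolding um_coloring_def by blast
qed

theorem um_colouring_from_degree_lists:
  assumes "finite V" "hypergraph V E"
    and "\<forall>v\<in>V. L v \<subseteq> {0<..} \<and> (infinite (L v) \<or> card (incident E v) < card (L v))"
  shows "\<exists>C. um_coloring V E C \<and> (\<forall>v\<in>V. C v \<in> L v)"
  using assms
proof (induction V arbitrary: E rule: finite_induct)
  case empty
  then have "E = {}"
    unfolding hypergraph_def by blast
  then show ?case
    unfolding um_coloring_def by auto
next
  case (insert v F)
  let ?E' = "delete_vertex E v"
  have finE: "finite E"
    using finite_edges insert.hyps(1) insert.prems(1) by blast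
  have lists_F: "\<forall>u\<in>F. L u \<subseteq> {0<..} \<and> (infinite (L u) \<or> card (incident ?E' u) < card (L u))"
  proof
    fix u assume "u \<in> F"
    then have "L u \<subseteq> {0<..} \<and> (infinite (L u) \<or> card (incident E u) < card (L u))"
      using insert.prems(2) by simp
    then show "L u \<subseteq> {0<..} \<and> (infinite (L u) \<or> card (incident ?E' u) < card (L u))"
      using degree_delete_vertex_le[OF finE, of v u] by linarith
  qed
  obtain C where C: "um_coloring F ?E' C" "\<forall>u\<in>F. C u \<in> L u"
    using insert.IH[OF hypergraph_delete_vertex[OF insert.prems(1)] lists_F] by blast
  have list_v: "L v \<subseteq> {0<..}" "infinite (L v) \<or> card (incident E v) < card (L v)"
    using insert.prems(2) by simp_all
  obtain c where c: "c \<in> L v" "c \<notin> forbidden_colours E C v"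
    using list_avoids[OF _ _ list_v(2)] card_forbidden_colours[OF finE] by blast
  have "um_coloring (insert v F) E (C(v := c))"
    using c list_v(1) by (intro extend_um_coloring[OF insert.hyps(1) insert.prems(1) C(1)]) auto
  moreover have "\<forall>u\<in>insert v F. (C(v := c)) u \<in> L u"
    using C(2) c(1) insert.hyps(2) by auto
  ultimately show ?case by blast
qed

theorem corollary5p4:
  fixes V :: "'a set" and E :: "'a set set"
  assumes "finite V" and "hypergraph V E"
  shows "um_choosable V E (max_degree V E + 1) \<and> ch_um V E \<le> max_degree V E + 1"
proof -
  have degree_le: "card (incident E v) \<le> max_degree V E" if "v \<in> V" for v
    unfolding max_degree_def incident_def using assms(1) that by (intro Max_ge) auto
  have "um_choosable V E (max_degree V E + 1)"
    unfolding um_choosable_def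
  proof (intro allI impI)
    fix L :: "'a \<Rightarrow> nat set"
    assume "\<forall>v\<in>V. L v \<subseteq> {0<..} \<and> list_size_ge (L v) (max_degree V E + 1)"
    then have "\<forall>v\<in>V. L v \<subseteq> {0<..} \<and> (infinite (L v) \<or> card (incident E v) < card (L v))"
      using degree_le unfolding list_size_ge_def by fastforce
    then show "\<exists>C. um_coloring V E C \<and> (\<forall>v\<in>V. C v \<in> L v)"
      using um_colouring_from_degree_lists assms by blast
  qed
  then show ?thesis
    unfolding ch_um_def by (auto intro: Least_le)
qed

end
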